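(* Let $P$ be a poset, let $\iota:\mathbf{JF}^+_P\to\mathbf{JF}_P$ be the inclusion, let $F_P$ send a frame-generating join-specification $\mathcal{U}$ to $\eta:P\to\mathcal{I}_{\mathcal{U}}$, $p\mapsto p^\downarrow$ (and an inclusion $\mathcal{U}_1\subseteq\mathcal{U}_2$ to the unique frame morphism $\mathcal{I}_{\mathcal{U}_1}\to\mathcal{I}_{\mathcal{U}_2}$ with $p^\downarrow\mapsto p^\downarrow$), let $G_P:\mathbf{JC}_P\to\mathbf{JF}^+_P$ send $e$ to $(\mathcal{U}_e)^-$ (arrows to inclusions), and let $G'_P:\mathbf{Frm}_P\to\mathbf{JF}^+_P$ be the restriction of $G_P$ to $\mathbf{Frm}_P$. Then $F_P\circ\iota\dashv G_P$ (with $F_P\circ\iota$ regarded as a functor $\mathbf{JF}^+_P\to\mathbf{JC}_P$), $F_P\dashv G'_P$ (with $F_P:\mathbf{JF}_P\to\mathbf{Frm}_P$ and $G'_P$ regarded as a functor into $\mathbf{JF}_P$), and $F_P\circ\iota\dashv G'_P$ (with $F_P\circ\iota:\mathbf{JF}^+_P\to\mathbf{Frm}_P$).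
   Context: A join-specification for $P$ is a set $\mathcal{U}\subseteq\wp(P)$ such that $\bigvee S$ exists in $P$ for every $S\in\mathcal{U}$ and $\{p\}\in\mathcal{U}$ for every $p\in P$. A $\mathcal{U}$-ideal is a down-closed $C$ with $\bigvee S\in C$ whenever $S\in\mathcal{U}$, $S\subseteq C$; $\mathcal{I}_{\mathcal{U}}$ is the complete lattice of $\mathcal{U}$-ideals; $\Gamma_{\mathcal{U}}(S)$ is the smallest $\mathcal{U}$-ideal containing $S$; $\mathcal{U}^+=\{S:\bigvee S\text{ exists and }\bigvee S\in\Gamma_{\mathcal{U}}(S)\}$; $\mathcal{U}$ is maximal if $\mathcal{U}=\mathcal{U}^+$ and frame-generating if $\mathcal{I}_{\mathcal{U}}$ is a frame. $\mathbf{JF}_P$ (resp. $\mathbf{JF}^+_P$) is the thin category of frame-generating (resp. maximal frame-generating) join-specifications ordered by inclusion. A join-completion of $P$ is an order embedding $e:P\to L$ into a complete lattice with every element of $L$ a join of elements of $e[P]$. $\mathbf{JC}_P$ has join-completions as objects and, as arrows $e_1\to e_2$, completely join-preserving $f:L_1\to L_2$ with $f\circ e_1=e_2$. $\mathbf{Frm}_P$ has as objects join-completions $e:P\to L$ with $L$ a frame, and as arrows $e_1\to e_2$ frame morphisms (lattice homomorphisms preserving arbitrary joins) $f:L_1\to L_2$ with $f\circ e_1=e_2$. For a join-completion $e$, $\mathcal{U}_e=\{S\subseteq P:\bigvee S\text{ exists and }e(\bigvee S)=\bigvee e[S]\}$, and for a join-specification $\mathcal{V}$, $\mathcal{V}^-$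 is the largest frame-generating join-specification contained in $\mathcal{V}$ (which exists and, for $\mathcal{V}=\mathcal{U}_e$, is maximal). *)

theory Defs
  imports Main
begin

text \<open>A poset is a carrier set P inside a type of class order (with the induced order);
  a complete lattice L likewise is a carrier set with the induced order.\<close>

definition is_lub_in :: "'a::order set \<Rightarrow> 'a set \<Rightarrow> 'a \<Rightarrow> bool" where
  "is_lub_in P S x \<longleftrightarrow> x \<in> P \<and> (\<forall>s\<in>S. s \<le> x) \<and> (\<forall>y\<in>P. (\<forall>s\<in>S. s \<le> y) \<longrightarrow> x \<le> y)"

definition is_glb_in :: "'a::order set \<Rightarrow> 'a set \<Rightarrow> 'a \<Rightarrow> bool" where
  "is_glb_in P S x \<longleftrightarrow> x \<in> P \<and> (\<forall>s\<in>S. x \<le> s) \<and> (\<forall>y\<in>P. (\<forall>s\<in>S. y \<le> s) \<longrightarrow> y \<le> x)"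

definition has_join :: "'a::order set \<Rightarrow> 'a set \<Rightarrow> bool" where
  "has_join P S \<longleftrightarrow> (\<exists>x. is_lub_in P S x)"

definition join_in :: "'a::order set \<Rightarrow> 'a set \<Rightarrow> 'a" where
  "join_in P S = (THE x. is_lub_in P S x)"

definition meet_in :: "'a::order set \<Rightarrow> 'a set \<Rightarrow> 'a" where
  "meet_in P S = (THE x. is_glb_in P S x)"

definition complete_on :: "'a::order set \<Rightarrow> bool" where
  "complete_on L \<longleftrightarrow> (\<forall>A. A \<subseteq> L \<longrightarrow> has_join L A)"

definition frame_on :: "'a::order set \<Rightarrow> bool" where
  "frame_on L \<longleftrightarrow> complete_on L \<and>
     (\<forall>a\<in>L. \<forall>A. A \<subseteq> L \<longrightarrow>
        meet_in L {a, join_in L A} = join_in L ((\<lambda>b. meet_in L {a, b}) ` A))"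

definition join_spec :: "'a::order set \<Rightarrow> 'a set set \<Rightarrow> bool" where
  "join_spec P U \<longleftrightarrow> U \<subseteq> Pow P \<and> (\<forall>S\<in>U. has_join P S) \<and> (\<forall>p\<in>P. {p} \<in> U)"

definition U_ideal :: "'a::order set \<Rightarrow> 'a set set \<Rightarrow> 'a set \<Rightarrow> bool" where
  "U_ideal P U C \<longleftrightarrow> C \<subseteq> P \<and> (\<forall>x\<in>C. \<forall>y\<in>P. y \<le> x \<longrightarrow> y \<in> C)
     \<and> (\<forall>S\<in>U. S \<subseteq> C \<longrightarrow> join_in P S \<in> C)"

definition ideals :: "'a::order set \<Rightarrow> 'a set set \<Rightarrow> 'a set set" where
  "ideals P U = {C. U_ideal P U C}"

definition Gamma :: "'a::order set \<Rightarrow> 'a set set \<Rightarrow> 'a set \<Rightarrow> 'a set" where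
  "Gamma P U S = \<Inter>{C \<in> ideals P U. S \<subseteq> C}"

definition Uplus :: "'a::order set \<Rightarrow> 'a set set \<Rightarrow> 'a set set" where
  "Uplus P U = {S. S \<subseteq> P \<and> has_join P S \<and> join_in P S \<in> Gamma P U S}"

definition maximal_spec :: "'a::order set \<Rightarrow> 'a set set \<Rightarrow> bool" where
  "maximal_spec P U \<longleftrightarrow> U = Uplus P U"

definition frame_generating :: "'a::order set \<Rightarrow> 'a set set \<Rightarrow> bool" where
  "frame_generating P U \<longleftrightarrow> join_spec P U \<and> frame_on (ideals P U)"

text \<open>The largest frame-generating join-specification contained in V (the union of all
  frame-generating ones contained in V, which is the largest one whenever one exists).\<close>
definition Vminus :: "'a::order set \<Rightarrow> 'a set set \<Rightarrow> 'a set set" where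
  "Vminus P V = \<Union>{W. frame_generating P W \<and> W \<subseteq> V}"

definition join_completion :: "'a::order set \<Rightarrow> 'l::order set \<Rightarrow> ('a \<Rightarrow> 'l) \<Rightarrow> bool" where
  "join_completion P L e \<longleftrightarrow> complete_on L \<and> e ` P \<subseteq> L
     \<and> (\<forall>x\<in>P. \<forall>y\<in>P. x \<le> y \<longleftrightarrow> e x \<le> e y)
     \<and> (\<forall>x\<in>L. \<exists>A. A \<subseteq> P \<and> x = join_in L (e ` A))"

definition jc_arrow :: "'a::order set \<Rightarrow> 'l::order set \<Rightarrow> ('a \<Rightarrow> 'l)
     \<Rightarrow> 'm::order set \<Rightarrow> ('a \<Rightarrow> 'm) \<Rightarrow> ('l \<Rightarrow> 'm) \<Rightarrow> bool" where
  "jc_arrow P L1 e1 L2 e2 f \<longleftrightarrow> f ` L1 \<subseteq> L2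
     \<and> (\<forall>A. A \<subseteq> L1 \<longrightarrow> f (join_in L1 A) = join_in L2 (f ` A))
     \<and> (\<forall>p\<in>P. f (e1 p) = e2 p)"

definition frm_arrow :: "'a::order set \<Rightarrow> 'l::order set \<Rightarrow> ('a \<Rightarrow> 'l)
     \<Rightarrow> 'm::order set \<Rightarrow> ('a \<Rightarrow> 'm) \<Rightarrow> ('l \<Rightarrow> 'm) \<Rightarrow> bool" where
  "frm_arrow P L1 e1 L2 e2 f \<longleftrightarrow> jc_arrow P L1 e1 L2 e2 f
     \<and> (\<forall>a\<in>L1. \<forall>b\<in>L1. f (meet_in L1 {a, b}) = meet_in L2 {f a, f b})"

definition U_of :: "'a::order set \<Rightarrow> 'l::order set \<Rightarrow> ('a \<Rightarrow> 'l) \<Rightarrow> 'a set set" where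
  "U_of P L e = {S. S \<subseteq> P \<and> has_join P S \<and> e (join_in P S) = join_in L (e ` S)}"

definition eta :: "'a::order set \<Rightarrow> 'a \<Rightarrow> 'a set" where
  "eta P p = {q \<in> P. q \<le> p}"

definition G_obj :: "'a::order set \<Rightarrow> 'l::order set \<Rightarrow> ('a \<Rightarrow> 'l) \<Rightarrow> 'a set set" where
  "G_obj P L e = Vminus P (U_of P L e)"

end

theory Submission
  imports Defs
begin

text \<open>
  The U-ideals form a closure system on P with closure operator Gamma, and I_U is a frame exactly
  when U is distributive: whenever S \<in> U and p \<le> \<Squnion>S, the point p lies in the closure of
  p\<down> \<inter> S\<down>; equivalently Gamma preserves binary intersections of down-sets.
  Distributivity passes to unions, so (U_e)^- is the union of the frame-generating
  specifications inside U_e. Being frame-generating depends only on the ideals, which U^+ shares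
  with U, and U^+ stays inside U_e whenever U does; hence (U_e)^- is maximal.

  An arrow from eta : P \<rightarrow> I_U to a join-completion e : P \<rightarrow> L must send C to \<Squnion>e[C], because
  every U-ideal is the join of the principal ideals below it. This map preserves joins iff
  e preserves the joins prescribed by U, i.e. iff U \<subseteq> U_e, and it then also preserves binary
  meets when L is a frame, by density of e[P] in L. Hence such arrows exist, and are unique,
  exactly when U \<subseteq> U_e, i.e. when U \<subseteq> (U_e)^-.
\<close>

lemma is_lub_in_unique: "is_lub_in P S x \<Longrightarrow> is_lub_in P S y \<Longrightarrow> x = y"
  unfolding is_lub_in_def by (meson order_antisym)

lemma join_in_eqI: "is_lub_in P S x \<Longrightarrow> join_in P S = x"
  unfolding join_in_def using is_lub_in_unique by blast

lemma join_in_is_lub: "has_join P S \<Longrightarrow> is_lub_in P S (join_in P S)"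
  unfolding has_join_def using join_in_eqI by metis

lemma join_in_mem: "has_join P S \<Longrightarrow> join_in P S \<in> P"
  and join_in_upper: "has_join P S \<Longrightarrow> s \<in> S \<Longrightarrow> s \<le> join_in P S"
  and join_in_least: "has_join P S \<Longrightarrow> y \<in> P \<Longrightarrow> (\<And>s. s \<in> S \<Longrightarrow> s \<le> y) \<Longrightarrow> join_in P S \<le> y"
  using join_in_is_lub unfolding is_lub_in_def by blast+

lemma is_lub_in_singleton: "p \<in> P \<Longrightarrow> is_lub_in P {p} p"
  by (simp add: is_lub_in_def)

lemma has_join_singleton: "p \<in> P \<Longrightarrow> has_join P {p}"
  unfolding has_join_def using is_lub_in_singleton by blast

lemma join_in_singleton: "p \<in> P \<Longrightarrow> join_in P {p} = p"
  by (rule join_in_eqI) (rule is_lub_in_singleton)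

lemma meet_in_eqI: "is_glb_in P S x \<Longrightarrow> meet_in P S = x"
  unfolding meet_in_def is_glb_in_def by (rule the_equality) (auto intro: order_antisym)

lemma complete_on_has_join: "complete_on L \<Longrightarrow> A \<subseteq> L \<Longrightarrow> has_join L A"
  unfolding complete_on_def by blast

lemma complete_on_join_in_mem: "complete_on L \<Longrightarrow> A \<subseteq> L \<Longrightarrow> join_in L A \<in> L"
  by (blast intro: join_in_mem complete_on_has_join)

lemma complete_on_join_in_upper: "complete_on L \<Longrightarrow> A \<subseteq> L \<Longrightarrow> a \<in> A \<Longrightarrow> a \<le> join_in L A"
  by (blast intro: join_in_upper complete_on_has_join)

lemma complete_on_join_in_least:
  "complete_on L \<Longrightarrow> A \<subseteq> L \<Longrightarrow> y \<in> L \<Longrightarrow> (\<And>a. a \<in> A \<Longrightarrow> a \<le> y) \<Longrightarrow> join_in L A \<le> y"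
  by (blast intro: join_in_least complete_on_has_join)

lemma complete_on_join_in_mono:
  "complete_on L \<Longrightarrow> A \<subseteq> B \<Longrightarrow> B \<subseteq> L \<Longrightarrow> join_in L A \<le> join_in L B"
  by (meson complete_on_join_in_least complete_on_join_in_mem complete_on_join_in_upper subset_iff)

lemma complete_on_join_in_Union:
  assumes c: "complete_on L" and g: "\<And>C. C \<in> A \<Longrightarrow> g C \<subseteq> L"
  shows "join_in L (\<Union>C\<in>A. g C) = join_in L ((\<lambda>C. join_in L (g C)) ` A)"
proof (rule order.antisym)
  have gA: "(\<Union>C\<in>A. g C) \<subseteq> L" and jA: "(\<lambda>C. join_in L (g C)) ` A \<subseteq> L"
    using g complete_on_join_in_mem[OF c] by blast+
  show "join_in L (\<Union>C\<in>A. g C) \<le> join_in L ((\<lambda>C. join_in L (g C)) ` A)"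
  proof (rule complete_on_join_in_least[OF c gA complete_on_join_in_mem[OF c jA]])
    fix a assume "a \<in> (\<Union>C\<in>A. g C)"
    then obtain C where C: "C \<in> A" "a \<in> g C" by blast
    then have "a \<le> join_in L (g C)" using complete_on_join_in_upper[OF c g] by blast
    also have "\<dots> \<le> join_in L ((\<lambda>C. join_in L (g C)) ` A)"
      using complete_on_join_in_upper[OF c jA] C(1) by blast
    finally show "a \<le> join_in L ((\<lambda>C. join_in L (g C)) ` A)" .
  qed
  show "join_in L ((\<lambda>C. join_in L (g C)) ` A) \<le> join_in L (\<Union>C\<in>A. g C)"
  proof (rule complete_on_join_in_least[OF c jA complete_on_join_in_mem[OF c gA]])
    fix a assume "a \<in> (\<lambda>C. join_in L (g C)) ` A"
    then obtain C where "C \<in> A" "a = join_in L (g C)" by blast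
    then show "a \<le> join_in L (\<Union>C\<in>A. g C)"
      using complete_on_join_in_mono[OF c _ gA] by blast
  qed
qed

lemma complete_on_is_glb_pair:
  assumes "complete_on L" "x \<in> L" "y \<in> L"
  shows "is_glb_in L {x, y} (meet_in L {x, y})"
proof -
  have "is_glb_in L {x, y} (join_in L {z \<in> L. z \<le> x \<and> z \<le> y})"
    unfolding is_glb_in_def using assms
    by (auto intro!: complete_on_join_in_mem complete_on_join_in_least complete_on_join_in_upper)
  then show ?thesis using meet_in_eqI by metis
qed

lemma meet_in_mem: "complete_on L \<Longrightarrow> x \<in> L \<Longrightarrow> y \<in> L \<Longrightarrow> meet_in L {x, y} \<in> L"
  and meet_in_lower1: "complete_on L \<Longrightarrow> x \<in> L \<Longrightarrow> y \<in> L \<Longrightarrow> meet_in L {x, y} \<le> x"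
  and meet_in_lower2: "complete_on L \<Longrightarrow> x \<in> L \<Longrightarrow> y \<in> L \<Longrightarrow> meet_in L {x, y} \<le> y"
  and meet_in_greatest: "complete_on L \<Longrightarrow> x \<in> L \<Longrightarrow> y \<in> L \<Longrightarrow> z \<in> L \<Longrightarrow> z \<le> x \<Longrightarrow> z \<le> y
      \<Longrightarrow> z \<le> meet_in L {x, y}"
  using complete_on_is_glb_pair unfolding is_glb_in_def by blast+

lemma frame_on_complete: "frame_on L \<Longrightarrow> complete_on L"
  unfolding frame_on_def by blast

lemma frame_on_meet_join:
  "frame_on L \<Longrightarrow> a \<in> L \<Longrightarrow> A \<subseteq> L
    \<Longrightarrow> meet_in L {a, join_in L A} = join_in L ((\<lambda>b. meet_in L {a, b}) ` A)"
  unfolding frame_on_def by blast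

lemma frame_on_meet_joins_le:
  assumes fr: "frame_on L" and A: "A \<subseteq> L" and B: "B \<subseteq> L" and m: "m \<in> L"
    and le: "\<And>a b. a \<in> A \<Longrightarrow> b \<in> B \<Longrightarrow> meet_in L {a, b} \<le> m"
  shows "meet_in L {join_in L A, join_in L B} \<le> m"
proof -
  have c: "complete_on L" using fr by (rule frame_on_complete)
  have jA: "join_in L A \<in> L" using complete_on_join_in_mem[OF c A] .
  have "meet_in L {b, join_in L A} \<le> m" if b: "b \<in> B" for b
  proof -
    have bL: "b \<in> L" using b B by blast
    have "meet_in L {b, join_in L A} = join_in L ((\<lambda>a. meet_in L {b, a}) ` A)"
      using frame_on_meet_join[OF fr bL A] .
    also have "\<dots> \<le> m"
      using le b A bL by (auto intro!: complete_on_join_in_least[OF c _ m] meet_in_mem[OF c]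
          simp: insert_commute)
    finally show ?thesis .
  qed
  moreover have "meet_in L {join_in L A, join_in L B} = join_in L ((\<lambda>b. meet_in L {join_in L A, b}) ` B)"
    using frame_on_meet_join[OF fr jA B] .
  ultimately show ?thesis
    using B jA by (auto intro!: complete_on_join_in_least[OF c _ m] meet_in_mem[OF c]
        simp: insert_commute)
qed

definition down_set :: "'a::order set \<Rightarrow> 'a set \<Rightarrow> bool" where
  "down_set P X \<longleftrightarrow> X \<subseteq> P \<and> (\<forall>x\<in>X. \<forall>y\<in>P. y \<le> x \<longrightarrow> y \<in> X)"

lemma down_setD: "down_set P X \<Longrightarrow> x \<in> X \<Longrightarrow> y \<in> P \<Longrightarrow> y \<le> x \<Longrightarrow> y \<in> X"
  and down_set_subset: "down_set P X \<Longrightarrow> X \<subseteq> P"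
  unfolding down_set_def by blast+

lemma down_set_Union: "(\<And>C. C \<in> A \<Longrightarrow> down_set P C) \<Longrightarrow> down_set P (\<Union>A)"
  unfolding down_set_def by blast

lemma eta_mono: "x \<le> y \<Longrightarrow> eta P x \<subseteq> eta P y"
  unfolding eta_def using order.trans by blast

lemma down_set_eta: "down_set P (eta P p)"
  unfolding down_set_def eta_def using order.trans by blast

lemma eta_le_iff: "x \<in> P \<Longrightarrow> eta P x \<subseteq> eta P y \<longleftrightarrow> x \<le> y"
  unfolding eta_def using order.trans by blast

lemma Union_eta_down_set: "down_set P X \<Longrightarrow> \<Union>(eta P ` X) = X"
  unfolding down_set_def eta_def by blast

lemma join_spec_has_join: "join_spec P U \<Longrightarrow> S \<in> U \<Longrightarrow> has_join P S"
  and join_spec_subset: "join_spec P U \<Longrightarrow> S \<in> U \<Longrightarrow> S \<subseteq> P"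
  and join_spec_singleton: "join_spec P U \<Longrightarrow> p \<in> P \<Longrightarrow> {p} \<in> U"
  unfolding join_spec_def by blast+

lemma ideals_iff:
  "C \<in> ideals P U \<longleftrightarrow> down_set P C \<and> (\<forall>S\<in>U. S \<subseteq> C \<longrightarrow> join_in P S \<in> C)"
  by (auto simp: ideals_def U_ideal_def down_set_def)

lemma idealsI:
  "down_set P C \<Longrightarrow> (\<And>S. S \<in> U \<Longrightarrow> S \<subseteq> C \<Longrightarrow> join_in P S \<in> C) \<Longrightarrow> C \<in> ideals P U"
  unfolding ideals_iff by blast

lemma down_set_ideal: "C \<in> ideals P U \<Longrightarrow> down_set P C"
  and ideal_join_closed: "C \<in> ideals P U \<Longrightarrow> S \<in> U \<Longrightarrow> S \<subseteq> C \<Longrightarrow> join_in P S \<in> C"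
  unfolding ideals_iff by blast+

lemma ideal_subset: "C \<in> ideals P U \<Longrightarrow> C \<subseteq> P"
  using down_set_ideal down_set_subset by blast

lemma ideals_antimono: "W \<subseteq> V \<Longrightarrow> ideals P V \<subseteq> ideals P W"
  by (auto simp: ideals_iff subset_iff)

lemma Inter_in_ideals:
  assumes F: "F \<subseteq> ideals P U" and ne: "F \<noteq> {}"
  shows "\<Inter>F \<in> ideals P U"
proof (rule idealsI)
  have "\<Inter>F \<subseteq> P" using F ne ideal_subset by blast
  moreover have "y \<in> \<Inter>F" if "x \<in> \<Inter>F" "y \<in> P" "y \<le> x" for x y
  proof
    fix C assume "C \<in> F"
    then show "y \<in> C" using that F down_setD[OF down_set_ideal] by blast
  qed
  ultimately show "down_set P (\<Inter>F)" unfolding down_set_def by blast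
  show "join_in P S \<in> \<Inter>F" if "S \<in> U" "S \<subseteq> \<Inter>F" for S
  proof
    fix C assume "C \<in> F"
    then show "join_in P S \<in> C" using that F ideal_join_closed by blast
  qed
qed

lemma Int_in_ideals: "a \<in> ideals P U \<Longrightarrow> b \<in> ideals P U \<Longrightarrow> a \<inter> b \<in> ideals P U"
  using Inter_in_ideals[of "{a, b}"] by simp

lemma carrier_in_ideals: "join_spec P U \<Longrightarrow> P \<in> ideals P U"
  by (auto simp: down_set_def intro!: idealsI join_in_mem join_spec_has_join)

lemma eta_in_ideals:
  assumes js: "join_spec P U" and p: "p \<in> P"
  shows "eta P p \<in> ideals P U"
proof (rule idealsI[OF down_set_eta])
  fix S assume "S \<in> U" "S \<subseteq> eta P p"
  then show "join_in P S \<in> eta P p"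
    using p join_spec_has_join[OF js] by (auto simp: eta_def intro!: join_in_mem join_in_least)
qed

lemma Gamma_in_ideals:
  assumes "join_spec P U" and "X \<subseteq> P"
  shows "Gamma P U X \<in> ideals P U"
proof -
  have "P \<in> {C \<in> ideals P U. X \<subseteq> C}" using assms carrier_in_ideals by blast
  then show ?thesis unfolding Gamma_def by (intro Inter_in_ideals) blast+
qed

lemma Gamma_superset: "X \<subseteq> Gamma P U X"
  unfolding Gamma_def by blast

lemma Gamma_least: "C \<in> ideals P U \<Longrightarrow> X \<subseteq> C \<Longrightarrow> Gamma P U X \<subseteq> C"
  unfolding Gamma_def by blast

lemma Gamma_mono: "X \<subseteq> Y \<Longrightarrow> Gamma P U X \<subseteq> Gamma P U Y"
  unfolding Gamma_def by blast

lemma Gamma_antimono_spec: "W \<subseteq> V \<Longrightarrow> Gamma P W X \<subseteq> Gamma P V X"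
  unfolding Gamma_def using ideals_antimono[of W V P] by (intro Inter_anti_mono) blast

lemma Gamma_ideal_eq: "C \<in> ideals P U \<Longrightarrow> Gamma P U C = C"
  using Gamma_least[of C P U C] Gamma_superset[of C P U] by blast

lemma Gamma_eqI:
  "join_spec P U \<Longrightarrow> X \<subseteq> P \<Longrightarrow> X \<subseteq> Y \<Longrightarrow> Y \<subseteq> Gamma P U X \<Longrightarrow> Gamma P U Y = Gamma P U X"
  by (simp add: Gamma_in_ideals Gamma_least Gamma_mono order.antisym)

lemma is_lub_in_ideals:
  assumes js: "join_spec P U" and A: "A \<subseteq> ideals P U"
  shows "is_lub_in (ideals P U) A (Gamma P U (\<Union>A))"
  unfolding is_lub_in_def
proof (intro conjI ballI impI)
  have "\<Union>A \<subseteq> P" using A ideal_subset by blast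
  then show "Gamma P U (\<Union>A) \<in> ideals P U" by (rule Gamma_in_ideals[OF js])
  show "C \<le> Gamma P U (\<Union>A)" if "C \<in> A" for C
    using that Gamma_superset by blast
  show "Gamma P U (\<Union>A) \<le> C" if "C \<in> ideals P U" "\<forall>B\<in>A. B \<le> C" for C
    using that by (simp add: Gamma_least Union_least)
qed

lemma join_in_ideals: "join_spec P U \<Longrightarrow> A \<subseteq> ideals P U \<Longrightarrow> join_in (ideals P U) A = Gamma P U (\<Union>A)"
  by (rule join_in_eqI) (rule is_lub_in_ideals)

lemma complete_on_ideals: "join_spec P U \<Longrightarrow> complete_on (ideals P U)"
  unfolding complete_on_def has_join_def using is_lub_in_ideals by metis

lemma meet_in_ideals: "a \<in> ideals P U \<Longrightarrow> b \<in> ideals P U \<Longrightarrow> meet_in (ideals P U) {a, b} = a \<inter> b"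
  by (rule meet_in_eqI) (auto simp: is_glb_in_def intro: Int_in_ideals)

lemma join_in_ideals_eta:
  assumes js: "join_spec P U" and C: "C \<in> ideals P U"
  shows "join_in (ideals P U) (eta P ` C) = C"
proof -
  have "eta P ` C \<subseteq> ideals P U" using eta_in_ideals[OF js] ideal_subset[OF C] by blast
  then have "join_in (ideals P U) (eta P ` C) = Gamma P U (\<Union>(eta P ` C))"
    by (rule join_in_ideals[OF js])
  also have "\<dots> = C"
    using Union_eta_down_set[OF down_set_ideal[OF C]] Gamma_ideal_eq[OF C] by simp
  finally show ?thesis .
qed

lemma Gamma_Union_eta:
  assumes js: "join_spec P U" and S: "S \<in> U"
  shows "Gamma P U (\<Union>(eta P ` S)) = eta P (join_in P S)"
proof (rule order.antisym)
  have hj: "has_join P S" using join_spec_has_join[OF js S] .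
  show "Gamma P U (\<Union>(eta P ` S)) \<subseteq> eta P (join_in P S)"
  proof (rule Gamma_least[OF eta_in_ideals[OF js join_in_mem[OF hj]]])
    show "\<Union>(eta P ` S) \<subseteq> eta P (join_in P S)"
      using eta_mono[OF join_in_upper[OF hj]] by blast
  qed
  have G: "Gamma P U (\<Union>(eta P ` S)) \<in> ideals P U"
    by (rule Gamma_in_ideals[OF js]) (auto simp: eta_def)
  have "S \<subseteq> \<Union>(eta P ` S)"
    using join_spec_subset[OF js S] by (auto simp: eta_def)
  then have "join_in P S \<in> Gamma P U (\<Union>(eta P ` S))"
    using ideal_join_closed[OF G S] Gamma_superset by blast
  then show "eta P (join_in P S) \<subseteq> Gamma P U (\<Union>(eta P ` S))"
    using down_setD[OF down_set_ideal[OF G]] by (auto simp: eta_def)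
qed

lemma eta_join_in:
  assumes js: "join_spec P U" and S: "S \<in> U"
  shows "eta P (join_in P S) = join_in (ideals P U) (eta P ` S)"
proof -
  have "eta P ` S \<subseteq> ideals P U"
    using eta_in_ideals[OF js] join_spec_subset[OF js S] by blast
  then show ?thesis using join_in_ideals[OF js] Gamma_Union_eta[OF js S] by simp
qed

section \<open>Distributive join-specifications\<close>

definition distributive_spec :: "'a::order set \<Rightarrow> 'a set set \<Rightarrow> bool" where
  "distributive_spec P U \<longleftrightarrow>
     (\<forall>S\<in>U. \<forall>p\<in>P. p \<le> join_in P S \<longrightarrow> p \<in> Gamma P U (eta P p \<inter> \<Union>(eta P ` S)))"

lemma distributive_specD:
  "distributive_spec P U \<Longrightarrow> S \<in> U \<Longrightarrow> p \<in> P \<Longrightarrow> p \<le> join_in P S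
    \<Longrightarrow> p \<in> Gamma P U (eta P p \<inter> \<Union>(eta P ` S))"
  unfolding distributive_spec_def by blast

text \<open>The points q such that every p \<le> q lies in the closure of the part of X below p form
  a U-ideal containing X, hence containing Gamma X.\<close>
lemma Gamma_localize:
  assumes js: "join_spec P U" and d: "distributive_spec P U" and X: "down_set P X"
    and q: "q \<in> Gamma P U X"
  shows "q \<in> Gamma P U (X \<inter> eta P q)"
proof -
  define K where "K = {q \<in> P. \<forall>p \<in> eta P q. p \<in> Gamma P U (X \<inter> eta P p)}"
  have GXp: "Gamma P U (X \<inter> eta P p) \<in> ideals P U" for p
    using Gamma_in_ideals[OF js] down_set_subset[OF X] by blast
  have "K \<in> ideals P U"
  proof (rule idealsI)
    show "down_set P K"
      unfolding down_set_def K_def using eta_mono by blast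
    fix S assume S: "S \<in> U" and SK: "S \<subseteq> K"
    have hj: "has_join P S" using join_spec_has_join[OF js S] .
    have "p \<in> Gamma P U (X \<inter> eta P p)" if p: "p \<in> P" "p \<le> join_in P S" for p
    proof -
      have "eta P p \<inter> \<Union>(eta P ` S) \<subseteq> Gamma P U (X \<inter> eta P p)"
      proof
        fix r assume r: "r \<in> eta P p \<inter> \<Union>(eta P ` S)"
        then obtain s where s: "s \<in> S" and rs: "r \<in> eta P s" by blast
        have "r \<in> Gamma P U (X \<inter> eta P r)" using SK s rs unfolding K_def by blast
        moreover have "r \<le> p" using r by (simp add: eta_def)
        then have "X \<inter> eta P r \<subseteq> X \<inter> eta P p" using eta_mono by blast
        ultimately show "r \<in> Gamma P U (X \<inter> eta P p)" using Gamma_mono by blast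
      qed
      then have "Gamma P U (eta P p \<inter> \<Union>(eta P ` S)) \<subseteq> Gamma P U (X \<inter> eta P p)"
        by (rule Gamma_least[OF GXp])
      then show ?thesis using distributive_specD[OF d S p] by blast
    qed
    then show "join_in P S \<in> K"
      unfolding K_def using join_in_mem[OF hj] by (simp add: eta_def)
  qed
  moreover have "X \<subseteq> K"
  proof
    fix x assume x: "x \<in> X"
    have "p \<in> Gamma P U (X \<inter> eta P p)" if "p \<in> eta P x" for p
      using that down_setD[OF X x] Gamma_superset by (fastforce simp: eta_def)
    then show "x \<in> K" unfolding K_def using x down_set_subset[OF X] by blast
  qed
  ultimately have "q \<in> K" using q Gamma_least by blast
  then show ?thesis unfolding K_def eta_def by blast
qed

lemma Gamma_Int:
  assumes js: "join_spec P U" and d: "distributive_spec P U"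
    and X: "down_set P X" and Y: "down_set P Y"
  shows "Gamma P U X \<inter> Gamma P U Y = Gamma P U (X \<inter> Y)"
proof
  show "Gamma P U (X \<inter> Y) \<subseteq> Gamma P U X \<inter> Gamma P U Y"
    using Gamma_mono[of "X \<inter> Y" X] Gamma_mono[of "X \<inter> Y" Y] by blast
  have XY: "Gamma P U (X \<inter> Y) \<in> ideals P U"
    using Gamma_in_ideals[OF js] down_set_subset[OF X] by blast
  have GY: "down_set P (Gamma P U Y)"
    using down_set_ideal[OF Gamma_in_ideals[OF js down_set_subset[OF Y]]] .
  have "X \<inter> eta P q \<subseteq> Gamma P U (X \<inter> Y)" if q: "q \<in> Gamma P U Y" for q
  proof
    fix r assume r: "r \<in> X \<inter> eta P q"
    then have "r \<in> Gamma P U Y" using down_setD[OF GY q] by (auto simp: eta_def)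
    then have "r \<in> Gamma P U (Y \<inter> eta P r)" using Gamma_localize[OF js d Y] by blast
    moreover have "Y \<inter> eta P r \<subseteq> X \<inter> Y" using r down_setD[OF X] by (auto simp: eta_def)
    ultimately show "r \<in> Gamma P U (X \<inter> Y)" using Gamma_mono by blast
  qed
  then show "Gamma P U X \<inter> Gamma P U Y \<subseteq> Gamma P U (X \<inter> Y)"
    using Gamma_localize[OF js d X] Gamma_least[OF XY] by blast
qed

lemma meet_in_ideals_image:
  "a \<in> ideals P U \<Longrightarrow> A \<subseteq> ideals P U
    \<Longrightarrow> (\<lambda>b. meet_in (ideals P U) {a, b}) ` A = (\<lambda>b. a \<inter> b) ` A"
  using meet_in_ideals by (metis (no_types, lifting) image_cong subsetD)

lemma frame_on_ideals_if_distributive: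
  assumes js: "join_spec P U" and d: "distributive_spec P U"
  shows "frame_on (ideals P U)"
  unfolding frame_on_def
proof (intro conjI ballI allI impI)
  let ?I = "ideals P U"
  show "complete_on ?I" using complete_on_ideals[OF js] .
  fix a A assume a: "a \<in> ?I" and A: "A \<subseteq> ?I"
  have UA: "down_set P (\<Union>A)" using A down_set_ideal by (blast intro: down_set_Union)
  have G: "Gamma P U (\<Union>A) \<in> ?I" using Gamma_in_ideals[OF js down_set_subset[OF UA]] .
  have aA: "(\<lambda>b. a \<inter> b) ` A \<subseteq> ?I" using A Int_in_ideals[OF a] by blast
  have "meet_in ?I {a, join_in ?I A} = Gamma P U a \<inter> Gamma P U (\<Union>A)"
    using join_in_ideals[OF js A] meet_in_ideals[OF a G] Gamma_ideal_eq[OF a] by simp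
  also have "\<dots> = Gamma P U (a \<inter> \<Union>A)" using Gamma_Int[OF js d down_set_ideal[OF a] UA] .
  also have "a \<inter> \<Union>A = \<Union>((\<lambda>b. a \<inter> b) ` A)" by blast
  also have "Gamma P U \<dots> = join_in ?I ((\<lambda>b. meet_in ?I {a, b}) ` A)"
    using join_in_ideals[OF js aA] meet_in_ideals_image[OF a A] by simp
  finally show "meet_in ?I {a, join_in ?I A} = join_in ?I ((\<lambda>b. meet_in ?I {a, b}) ` A)" .
qed

lemma distributive_if_frame_on_ideals:
  assumes js: "join_spec P U" and fr: "frame_on (ideals P U)"
  shows "distributive_spec P U"
  unfolding distributive_spec_def
proof (intro ballI impI)
  let ?I = "ideals P U"
  fix S p assume S: "S \<in> U" and p: "p \<in> P" and le: "p \<le> join_in P S"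
  have A: "eta P ` S \<subseteq> ?I" using eta_in_ideals[OF js] join_spec_subset[OF js S] by blast
  have ep: "eta P p \<in> ?I" using eta_in_ideals[OF js p] .
  have eS: "eta P (join_in P S) \<in> ?I"
    using eta_in_ideals[OF js join_in_mem[OF join_spec_has_join[OF js S]]] .
  have pA: "(\<lambda>b. eta P p \<inter> b) ` eta P ` S \<subseteq> ?I" using A Int_in_ideals[OF ep] by blast
  have "p \<in> eta P p \<inter> eta P (join_in P S)" using p le by (simp add: eta_def)
  also have "\<dots> = meet_in ?I {eta P p, join_in ?I (eta P ` S)}"
    using eta_join_in[OF js S] meet_in_ideals[OF ep eS] by simp
  also have "\<dots> = join_in ?I ((\<lambda>b. meet_in ?I {eta P p, b}) ` eta P ` S)"
    using frame_on_meet_join[OF fr ep A] .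
  also have "\<dots> = Gamma P U (\<Union>((\<lambda>b. eta P p \<inter> b) ` eta P ` S))"
    using join_in_ideals[OF js pA] meet_in_ideals_image[OF ep A] by simp
  also have "\<Union>((\<lambda>b. eta P p \<inter> b) ` eta P ` S) = eta P p \<inter> \<Union>(eta P ` S)" by blast
  finally show "p \<in> Gamma P U (eta P p \<inter> \<Union>(eta P ` S))" .
qed

lemma frame_generating_iff: "frame_generating P U \<longleftrightarrow> join_spec P U \<and> distributive_spec P U"
  unfolding frame_generating_def
  using frame_on_ideals_if_distributive distributive_if_frame_on_ideals by blast

lemma frame_generating_join_spec: "frame_generating P U \<Longrightarrow> join_spec P U"
  unfolding frame_generating_def by blast

section \<open>The ideal completion functor\<close>

lemma join_completion_eta:
  assumes js: "join_spec P U"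
  shows "join_completion P (ideals P U) (eta P)"
  unfolding join_completion_def
proof (intro conjI ballI)
  show "complete_on (ideals P U)" using complete_on_ideals[OF js] .
  show "eta P ` P \<subseteq> ideals P U" using eta_in_ideals[OF js] by blast
  show "x \<le> y \<longleftrightarrow> eta P x \<le> eta P y" if "x \<in> P" for x y
    using eta_le_iff[OF that] by simp
  show "\<exists>A. A \<subseteq> P \<and> C = join_in (ideals P U) (eta P ` A)" if "C \<in> ideals P U" for C
    using ideal_subset[OF that] join_in_ideals_eta[OF js that] by metis
qed

lemma Gamma_Gamma_antimono_spec:
  assumes js: "join_spec P V" and WV: "W \<subseteq> V" and X: "X \<subseteq> P"
  shows "Gamma P V (Gamma P W X) = Gamma P V X"
  using Gamma_eqI[OF js X Gamma_superset Gamma_antimono_spec[OF WV]] .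

lemma frm_arrow_Gamma:
  assumes js1: "join_spec P U1" and fg2: "frame_generating P U2" and sub: "U1 \<subseteq> U2"
  shows "frm_arrow P (ideals P U1) (eta P) (ideals P U2) (eta P) (Gamma P U2)"
proof -
  have js2: "join_spec P U2" and d2: "distributive_spec P U2"
    using fg2 unfolding frame_generating_iff by simp_all
  have G: "Gamma P U2 C \<in> ideals P U2" if "C \<in> ideals P U1" for C
    using Gamma_in_ideals[OF js2 ideal_subset[OF that]] .
  have joins: "Gamma P U2 (join_in (ideals P U1) A) = join_in (ideals P U2) (Gamma P U2 ` A)"
    if A: "A \<subseteq> ideals P U1" for A
  proof -
    have UA: "\<Union>A \<subseteq> P" using A ideal_subset by blast
    have GA: "Gamma P U2 ` A \<subseteq> ideals P U2" using A G by blast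
    have "\<Union>A \<subseteq> \<Union>(Gamma P U2 ` A)" using Gamma_superset by blast
    moreover have "\<Union>(Gamma P U2 ` A) \<subseteq> Gamma P U2 (\<Union>A)"
      using Gamma_mono[of _ "\<Union>A"] by blast
    ultimately have "Gamma P U2 (\<Union>(Gamma P U2 ` A)) = Gamma P U2 (\<Union>A)"
      by (rule Gamma_eqI[OF js2 UA])
    then show ?thesis
      using join_in_ideals[OF js1 A] join_in_ideals[OF js2 GA] Gamma_Gamma_antimono_spec[OF js2 sub UA]
      by simp
  qed
  have meets: "Gamma P U2 (meet_in (ideals P U1) {a, b})
      = meet_in (ideals P U2) {Gamma P U2 a, Gamma P U2 b}"
    if a: "a \<in> ideals P U1" and b: "b \<in> ideals P U1" for a b
    using meet_in_ideals[OF a b] meet_in_ideals[OF G[OF a] G[OF b]]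
      Gamma_Int[OF js2 d2 down_set_ideal[OF a] down_set_ideal[OF b]] by simp
  have "Gamma P U2 (eta P p) = eta P p" if "p \<in> P" for p
    using Gamma_ideal_eq[OF eta_in_ideals[OF js2 that]] .
  then show ?thesis
    unfolding frm_arrow_def jc_arrow_def using G joins meets by blast
qed

lemma join_completion_complete: "join_completion P L e \<Longrightarrow> complete_on L"
  and join_completion_image: "join_completion P L e \<Longrightarrow> A \<subseteq> P \<Longrightarrow> e ` A \<subseteq> L"
  and join_completion_le_iff: "join_completion P L e \<Longrightarrow> x \<in> P \<Longrightarrow> y \<in> P \<Longrightarrow> e x \<le> e y \<longleftrightarrow> x \<le> y"
  and join_completion_dense: "join_completion P L e \<Longrightarrow> z \<in> L \<Longrightarrow> \<exists>A\<subseteq>P. z = join_in L (e ` A)"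
  unfolding join_completion_def by blast+

lemma join_completion_mem: "join_completion P L e \<Longrightarrow> p \<in> P \<Longrightarrow> e p \<in> L"
  using join_completion_image[of P L e "{p}"] by simp

lemma join_in_image_eta:
  assumes jc: "join_completion P L e" and p: "p \<in> P"
  shows "join_in L (e ` eta P p) = e p"
proof (rule join_in_eqI)
  show "is_lub_in L (e ` eta P p) (e p)"
    unfolding is_lub_in_def
    using join_completion_mem[OF jc p] join_completion_le_iff[OF jc _ p] p
    by (auto simp: eta_def)
qed

lemma join_in_image_le:
  assumes jc: "join_completion P L e" and hj: "has_join P S" and S: "S \<subseteq> P"
  shows "join_in L (e ` S) \<le> e (join_in P S)"
  using complete_on_join_in_least[OF join_completion_complete[OF jc] join_completion_image[OF jc S]
      join_completion_mem[OF jc join_in_mem[OF hj]]]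
    join_completion_le_iff[OF jc _ join_in_mem[OF hj]] join_in_upper[OF hj] S
  by blast

lemma U_of_memI: "S \<subseteq> P \<Longrightarrow> has_join P S \<Longrightarrow> e (join_in P S) = join_in L (e ` S) \<Longrightarrow> S \<in> U_of P L e"
  and U_of_subset: "S \<in> U_of P L e \<Longrightarrow> S \<subseteq> P"
  and U_of_has_join: "S \<in> U_of P L e \<Longrightarrow> has_join P S"
  and U_of_join_in: "S \<in> U_of P L e \<Longrightarrow> e (join_in P S) = join_in L (e ` S)"
  unfolding U_of_def by blast+

lemma below_in_ideals:
  assumes jc: "join_completion P L e" and U: "U \<subseteq> U_of P L e" and m: "m \<in> L"
  shows "{p \<in> P. e p \<le> m} \<in> ideals P U"
proof (rule idealsI)
  show "down_set P {p \<in> P. e p \<le> m}"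
    unfolding down_set_def using join_completion_le_iff[OF jc] order.trans by blast
  fix S assume S: "S \<in> U" and SK: "S \<subseteq> {p \<in> P. e p \<le> m}"
  have SU: "S \<in> U_of P L e" using S U by blast
  have SP: "S \<subseteq> P" using U_of_subset[OF SU] .
  have "join_in L (e ` S) \<le> m"
    using complete_on_join_in_least[OF join_completion_complete[OF jc] join_completion_image[OF jc SP] m]
      SK by blast
  then show "join_in P S \<in> {p \<in> P. e p \<le> m}"
    using U_of_join_in[OF SU] join_in_mem[OF U_of_has_join[OF SU]] by simp
qed

lemma Gamma_subset_below_join_image:
  assumes jc: "join_completion P L e" and U: "U \<subseteq> U_of P L e" and X: "X \<subseteq> P"
  shows "Gamma P U X \<subseteq> {p \<in> P. e p \<le> join_in L (e ` X)}"
proof (rule Gamma_least[OF below_in_ideals[OF jc U]])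
  have c: "complete_on L" using join_completion_complete[OF jc] .
  show "join_in L (e ` X) \<in> L" using complete_on_join_in_mem[OF c join_completion_image[OF jc X]] .
  show "X \<subseteq> {p \<in> P. e p \<le> join_in L (e ` X)}"
    using X complete_on_join_in_upper[OF c join_completion_image[OF jc X]] by blast
qed

lemma join_in_image_Gamma:
  assumes jc: "join_completion P L e" and U: "U \<subseteq> U_of P L e" and X: "X \<subseteq> P"
  shows "join_in L (e ` Gamma P U X) = join_in L (e ` X)"
proof (rule order.antisym)
  have c: "complete_on L" using join_completion_complete[OF jc] .
  have below: "Gamma P U X \<subseteq> {p \<in> P. e p \<le> join_in L (e ` X)}"
    using Gamma_subset_below_join_image[OF jc U X] .
  then have GP: "Gamma P U X \<subseteq> P" by blast
  show "join_in L (e ` Gamma P U X) \<le> join_in L (e ` X)"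
    using complete_on_join_in_least[OF c join_completion_image[OF jc GP]
        complete_on_join_in_mem[OF c join_completion_image[OF jc X]]] below by blast
  show "join_in L (e ` X) \<le> join_in L (e ` Gamma P U X)"
    using complete_on_join_in_mono[OF c image_mono[OF Gamma_superset] join_completion_image[OF jc GP]] .
qed

lemma Uplus_subset_U_of:
  assumes jc: "join_completion P L e" and U: "U \<subseteq> U_of P L e"
  shows "Uplus P U \<subseteq> U_of P L e"
proof
  fix S assume "S \<in> Uplus P U"
  then have SP: "S \<subseteq> P" and hj: "has_join P S" and G: "join_in P S \<in> Gamma P U S"
    unfolding Uplus_def by blast+
  have "e (join_in P S) \<le> join_in L (e ` S)"
    using Gamma_subset_below_join_image[OF jc U SP] G by blast
  then have "e (join_in P S) = join_in L (e ` S)"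
    using join_in_image_le[OF jc hj SP] by (rule order.antisym)
  then show "S \<in> U_of P L e" by (rule U_of_memI[OF SP hj])
qed

definition singletons :: "'a set \<Rightarrow> 'a set set" where
  "singletons P = (\<lambda>p. {p}) ` P"

lemma frame_generating_singletons: "frame_generating P (singletons P)"
  unfolding frame_generating_iff
proof
  show "join_spec P (singletons P)"
    unfolding join_spec_def singletons_def using has_join_singleton by auto
  show "distributive_spec P (singletons P)"
    unfolding distributive_spec_def
  proof (intro ballI impI)
    fix S q assume S: "S \<in> singletons P" and q: "q \<in> P" "q \<le> join_in P S"
    obtain p where "p \<in> P" "S = {p}" using S unfolding singletons_def by blast
    then have "q \<in> eta P q \<inter> \<Union>(eta P ` S)"
      using q by (simp add: eta_def join_in_singleton)
    then show "q \<in> Gamma P (singletons P) (eta P q \<inter> \<Union>(eta P ` S))"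
      by (rule subsetD[OF Gamma_superset])
  qed
qed

lemma singletons_subset_U_of:
  assumes jc: "join_completion P L e"
  shows "singletons P \<subseteq> U_of P L e"
proof
  fix S assume "S \<in> singletons P"
  then obtain p where p: "p \<in> P" and S: "S = {p}" unfolding singletons_def by blast
  have "join_in L {e p} = e p" using join_in_singleton[OF join_completion_mem[OF jc p]] .
  then show "S \<in> U_of P L e"
    unfolding S using p by (intro U_of_memI) (simp_all add: has_join_singleton join_in_singleton)
qed

lemma Vminus_subset: "Vminus P V \<subseteq> V"
  unfolding Vminus_def by blast

lemma subset_Vminus: "frame_generating P W \<Longrightarrow> W \<subseteq> V \<Longrightarrow> W \<subseteq> Vminus P V"
  unfolding Vminus_def by blast

lemma Vminus_mono: "V1 \<subseteq> V2 \<Longrightarrow> Vminus P V1 \<subseteq> Vminus P V2"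
  unfolding Vminus_def by blast

text \<open>Distributivity passes to unions, since enlarging the specification enlarges closures.\<close>
lemma frame_generating_Vminus:
  assumes V: "singletons P \<subseteq> V"
  shows "frame_generating P (Vminus P V)"
  unfolding frame_generating_iff
proof
  have members: "\<exists>W. frame_generating P W \<and> W \<subseteq> Vminus P V \<and> S \<in> W" if "S \<in> Vminus P V" for S
    using that subset_Vminus unfolding Vminus_def by blast
  have singletons: "singletons P \<subseteq> Vminus P V"
    using subset_Vminus[OF frame_generating_singletons V] .
  show "join_spec P (Vminus P V)"
    unfolding join_spec_def
  proof (intro conjI ballI)
    show "Vminus P V \<subseteq> Pow P"
      using members join_spec_subset frame_generating_join_spec by blast
    show "has_join P S" if "S \<in> Vminus P V" for S
      using members[OF that] join_spec_has_join frame_generating_join_spec by blast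
    show "{p} \<in> Vminus P V" if "p \<in> P" for p
      using that singletons unfolding singletons_def by blast
  qed
  show "distributive_spec P (Vminus P V)"
    unfolding distributive_spec_def
  proof (intro ballI impI)
    fix S p assume S: "S \<in> Vminus P V" and p: "p \<in> P" "p \<le> join_in P S"
    obtain W where W: "frame_generating P W" "W \<subseteq> Vminus P V" "S \<in> W"
      using members[OF S] by blast
    have "p \<in> Gamma P W (eta P p \<inter> \<Union>(eta P ` S))"
      using distributive_specD[OF _ W(3) p] W(1) frame_generating_iff by blast
    then show "p \<in> Gamma P (Vminus P V) (eta P p \<inter> \<Union>(eta P ` S))"
      using Gamma_antimono_spec[OF W(2)] by blast
  qed
qed

lemma subset_Uplus:
  assumes js: "join_spec P U"
  shows "U \<subseteq> Uplus P U"
proof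
  fix S assume S: "S \<in> U"
  have SP: "S \<subseteq> P" using join_spec_subset[OF js S] .
  have "join_in P S \<in> Gamma P U S"
    using ideal_join_closed[OF Gamma_in_ideals[OF js SP] S Gamma_superset] .
  then show "S \<in> Uplus P U" unfolding Uplus_def using SP join_spec_has_join[OF js S] by blast
qed

lemma ideals_Uplus:
  assumes js: "join_spec P U"
  shows "ideals P (Uplus P U) = ideals P U"
proof
  show "ideals P (Uplus P U) \<subseteq> ideals P U" using ideals_antimono[OF subset_Uplus[OF js]] .
  show "ideals P U \<subseteq> ideals P (Uplus P U)"
  proof
    fix C assume C: "C \<in> ideals P U"
    show "C \<in> ideals P (Uplus P U)"
    proof (rule idealsI[OF down_set_ideal[OF C]])
      fix S assume "S \<in> Uplus P U" "S \<subseteq> C"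
      then show "join_in P S \<in> C"
        unfolding Uplus_def using Gamma_least[OF C] by blast
    qed
  qed
qed

lemma frame_generating_Uplus:
  assumes fg: "frame_generating P U"
  shows "frame_generating P (Uplus P U)"
proof -
  have js: "join_spec P U" using frame_generating_join_spec[OF fg] .
  have "join_spec P (Uplus P U)"
    unfolding join_spec_def
    using join_spec_singleton[OF js] subset_Uplus[OF js] by (auto simp: Uplus_def)
  then show ?thesis
    using fg ideals_Uplus[OF js] unfolding frame_generating_def by simp
qed

lemma frame_generating_G_obj: "join_completion P L e \<Longrightarrow> frame_generating P (G_obj P L e)"
  unfolding G_obj_def by (intro frame_generating_Vminus singletons_subset_U_of)

lemma maximal_spec_G_obj:
  assumes jc: "join_completion P L e"
  shows "maximal_spec P (G_obj P L e)"
proof -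
  let ?V = "G_obj P L e"
  have fg: "frame_generating P ?V" using frame_generating_G_obj[OF jc] .
  have "?V \<subseteq> U_of P L e" unfolding G_obj_def by (rule Vminus_subset)
  then have "Uplus P ?V \<subseteq> ?V"
    unfolding G_obj_def
    by (intro subset_Vminus frame_generating_Uplus Uplus_subset_U_of[OF jc])
      (simp_all add: fg[unfolded G_obj_def])
  moreover have "?V \<subseteq> Uplus P ?V" using subset_Uplus[OF frame_generating_join_spec[OF fg]] .
  ultimately show ?thesis unfolding maximal_spec_def by blast
qed

lemma U_of_mono:
  assumes jc1: "join_completion P L1 e1" and f: "jc_arrow P L1 e1 L2 e2 f"
  shows "U_of P L1 e1 \<subseteq> U_of P L2 e2"
proof
  fix S assume S: "S \<in> U_of P L1 e1"
  have SP: "S \<subseteq> P" and hj: "has_join P S" using U_of_subset[OF S] U_of_has_join[OF S] .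
  have fe: "\<And>p. p \<in> P \<Longrightarrow> f (e1 p) = e2 p"
    and fj: "\<And>A. A \<subseteq> L1 \<Longrightarrow> f (join_in L1 A) = join_in L2 (f ` A)"
    using f unfolding jc_arrow_def by blast+
  have "e2 (join_in P S) = f (e1 (join_in P S))" using fe[OF join_in_mem[OF hj]] by simp
  also have "\<dots> = join_in L2 (f ` e1 ` S)"
    using U_of_join_in[OF S] fj[OF join_completion_image[OF jc1 SP]] by simp
  also have "f ` e1 ` S = e2 ` S" using fe SP by (force simp: image_image)
  finally show "S \<in> U_of P L2 e2" by (rule U_of_memI[OF SP hj])
qed

lemma G_obj_mono:
  "join_completion P L1 e1 \<Longrightarrow> jc_arrow P L1 e1 L2 e2 f \<Longrightarrow> G_obj P L1 e1 \<subseteq> G_obj P L2 e2"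
  unfolding G_obj_def by (intro Vminus_mono U_of_mono)

section \<open>The adjunctions\<close>

lemma frm_arrow_jc_arrow: "frm_arrow P L1 e1 L2 e2 f \<Longrightarrow> jc_arrow P L1 e1 L2 e2 f"
  unfolding frm_arrow_def by blast

lemma subset_U_of_eta: "join_spec P U \<Longrightarrow> U \<subseteq> U_of P (ideals P U) (eta P)"
  by (rule subsetI, rule U_of_memI[OF join_spec_subset join_spec_has_join eta_join_in])

lemma subset_U_of_if_jc_arrow:
  "join_spec P U \<Longrightarrow> jc_arrow P (ideals P U) (eta P) L e f \<Longrightarrow> U \<subseteq> U_of P L e"
  by (rule order.trans[OF subset_U_of_eta U_of_mono[OF join_completion_eta]])

text \<open>Every U-ideal is the join of the principal ideals below it, so an arrow out of the ideal
  completion is determined by the embedding.\<close>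
lemma jc_arrow_from_ideals_eq:
  assumes js: "join_spec P U" and f: "jc_arrow P (ideals P U) (eta P) L e f"
    and C: "C \<in> ideals P U"
  shows "f C = join_in L (e ` C)"
proof -
  have fe: "\<And>p. p \<in> P \<Longrightarrow> f (eta P p) = e p"
    and fj: "\<And>A. A \<subseteq> ideals P U \<Longrightarrow> f (join_in (ideals P U) A) = join_in L (f ` A)"
    using f unfolding jc_arrow_def by blast+
  have CP: "C \<subseteq> P" using ideal_subset[OF C] .
  have "f C = f (join_in (ideals P U) (eta P ` C))" using join_in_ideals_eta[OF js C] by simp
  also have "\<dots> = join_in L (f ` eta P ` C)"
    using eta_in_ideals[OF js] CP by (intro fj) blast
  also have "f ` eta P ` C = e ` C" using fe CP by (force simp: image_image)
  finally show ?thesis .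
qed

lemma jc_arrow_join_image:
  assumes js: "join_spec P U" and jc: "join_completion P L e" and U: "U \<subseteq> U_of P L e"
  shows "jc_arrow P (ideals P U) (eta P) L e (\<lambda>C. join_in L (e ` C))"
  unfolding jc_arrow_def
proof (intro conjI allI impI ballI)
  have c: "complete_on L" using join_completion_complete[OF jc] .
  have eC: "e ` C \<subseteq> L" if "C \<in> ideals P U" for C
    using join_completion_image[OF jc ideal_subset[OF that]] .
  show "(\<lambda>C. join_in L (e ` C)) ` ideals P U \<subseteq> L"
    using complete_on_join_in_mem[OF c eC] by (rule image_subsetI)
  fix A assume A: "A \<subseteq> ideals P U"
  have eA: "e ` C \<subseteq> L" if "C \<in> A" for C using eC A that by blast
  have UA: "\<Union>A \<subseteq> P" using A ideal_subset by blast
  have "join_in L (e ` join_in (ideals P U) A) = join_in L (e ` Gamma P U (\<Union>A))"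
    using join_in_ideals[OF js A] by simp
  also have "\<dots> = join_in L (\<Union>C\<in>A. e ` C)"
    using join_in_image_Gamma[OF jc U UA] by (simp add: image_Union)
  also have "\<dots> = join_in L ((\<lambda>C. join_in L (e ` C)) ` A)"
    by (rule complete_on_join_in_Union[OF c eA])
  finally show "join_in L (e ` join_in (ideals P U) A) = join_in L ((\<lambda>C. join_in L (e ` C)) ` A)" .
next
  show "join_in L (e ` eta P p) = e p" if "p \<in> P" for p
    using join_in_image_eta[OF jc that] .
qed

lemma meet_in_le_join_image_Int:
  assumes jc: "join_completion P L e" and q: "q \<in> P" and d: "d \<in> P"
  shows "meet_in L {e q, e d} \<le> join_in L (e ` (eta P q \<inter> eta P d))"
proof -
  have c: "complete_on L" using join_completion_complete[OF jc] .
  have eq: "e q \<in> L" and ed: "e d \<in> L" using join_completion_mem[OF jc] q d by blast+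
  obtain T where T: "T \<subseteq> P" and z: "meet_in L {e q, e d} = join_in L (e ` T)"
    using join_completion_dense[OF jc meet_in_mem[OF c eq ed]] by blast
  have "T \<subseteq> eta P q \<inter> eta P d"
  proof
    fix t assume t: "t \<in> T"
    then have tP: "t \<in> P" using T by blast
    have "e t \<le> meet_in L {e q, e d}"
      using z complete_on_join_in_upper[OF c join_completion_image[OF jc T]] t by simp
    then have "e t \<le> e q" "e t \<le> e d"
      using meet_in_lower1[OF c eq ed] meet_in_lower2[OF c eq ed] by (blast intro: order.trans)+
    then show "t \<in> eta P q \<inter> eta P d"
      using join_completion_le_iff[OF jc tP] q d tP by (simp add: eta_def)
  qed
  moreover have "eta P q \<inter> eta P d \<subseteq> P" by (auto simp: eta_def)
  ultimately show ?thesis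
    using z complete_on_join_in_mono[OF c image_mono join_completion_image[OF jc]] by simp
qed

lemma join_image_Int:
  assumes jc: "join_completion P L e" and fr: "frame_on L"
    and a: "down_set P a" and b: "down_set P b"
  shows "join_in L (e ` (a \<inter> b)) = meet_in L {join_in L (e ` a), join_in L (e ` b)}"
proof (rule order.antisym)
  have c: "complete_on L" using frame_on_complete[OF fr] .
  have ea: "e ` a \<subseteq> L" and eb: "e ` b \<subseteq> L" and eab: "e ` (a \<inter> b) \<subseteq> L"
    using join_completion_image[OF jc] down_set_subset[OF a] down_set_subset[OF b] by blast+
  have m: "join_in L (e ` (a \<inter> b)) \<in> L" using complete_on_join_in_mem[OF c eab] .
  show "join_in L (e ` (a \<inter> b)) \<le> meet_in L {join_in L (e ` a), join_in L (e ` b)}"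
  proof (rule meet_in_greatest[OF c complete_on_join_in_mem[OF c ea] complete_on_join_in_mem[OF c eb] m])
    show "join_in L (e ` (a \<inter> b)) \<le> join_in L (e ` a)"
      using complete_on_join_in_mono[OF c image_mono ea] by blast
    show "join_in L (e ` (a \<inter> b)) \<le> join_in L (e ` b)"
      using complete_on_join_in_mono[OF c image_mono eb] by blast
  qed
  show "meet_in L {join_in L (e ` a), join_in L (e ` b)} \<le> join_in L (e ` (a \<inter> b))"
  proof (rule frame_on_meet_joins_le[OF fr ea eb m])
    fix x y assume "x \<in> e ` a" "y \<in> e ` b"
    then obtain q d where qd: "q \<in> a" "d \<in> b" and xy: "x = e q" "y = e d" by blast
    have "eta P q \<inter> eta P d \<subseteq> a \<inter> b"
      using qd down_setD[OF a] down_setD[OF b] by (auto simp: eta_def)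
    then have "join_in L (e ` (eta P q \<inter> eta P d)) \<le> join_in L (e ` (a \<inter> b))"
      using complete_on_join_in_mono[OF c image_mono eab] by blast
    then show "meet_in L {x, y} \<le> join_in L (e ` (a \<inter> b))"
      using meet_in_le_join_image_Int[OF jc] qd xy down_set_subset[OF a] down_set_subset[OF b]
      by (blast intro: order.trans)
  qed
qed

lemma frm_arrow_join_image:
  assumes js: "join_spec P U" and jc: "join_completion P L e" and fr: "frame_on L"
    and U: "U \<subseteq> U_of P L e"
  shows "frm_arrow P (ideals P U) (eta P) L e (\<lambda>C. join_in L (e ` C))"
  unfolding frm_arrow_def
proof (intro conjI ballI)
  show "jc_arrow P (ideals P U) (eta P) L e (\<lambda>C. join_in L (e ` C))"
    using jc_arrow_join_image[OF js jc U] .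
  show "join_in L (e ` meet_in (ideals P U) {a, b}) = meet_in L {join_in L (e ` a), join_in L (e ` b)}"
    if "a \<in> ideals P U" "b \<in> ideals P U" for a b
    using meet_in_ideals[OF that] join_image_Int[OF jc fr down_set_ideal[OF that(1)] down_set_ideal[OF that(2)]]
    by simp
qed

lemma subset_G_obj_iff: "frame_generating P U \<Longrightarrow> U \<subseteq> G_obj P L e \<longleftrightarrow> U \<subseteq> U_of P L e"
  unfolding G_obj_def by (meson Vminus_subset subset_Vminus order.trans)

lemma jc_arrow_from_ideals_iff:
  assumes fg: "frame_generating P U" and jc: "join_completion P L e"
  shows "(\<exists>f. jc_arrow P (ideals P U) (eta P) L e f) \<longleftrightarrow> U \<subseteq> G_obj P L e"
proof -
  have js: "join_spec P U" using frame_generating_join_spec[OF fg] .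
  show ?thesis
    unfolding subset_G_obj_iff[OF fg]
    using subset_U_of_if_jc_arrow[OF js] jc_arrow_join_image[OF js jc] by (intro iffI) auto
qed

lemma frm_arrow_from_ideals_iff:
  assumes fg: "frame_generating P U" and jc: "join_completion P L e" and fr: "frame_on L"
  shows "(\<exists>f. frm_arrow P (ideals P U) (eta P) L e f) \<longleftrightarrow> U \<subseteq> G_obj P L e"
proof -
  have js: "join_spec P U" using frame_generating_join_spec[OF fg] .
  show ?thesis
    unfolding subset_G_obj_iff[OF fg]
  proof
    show "U \<subseteq> U_of P L e" if "\<exists>f. frm_arrow P (ideals P U) (eta P) L e f"
      using that subset_U_of_if_jc_arrow[OF js] frm_arrow_jc_arrow by blast
    show "\<exists>f. frm_arrow P (ideals P U) (eta P) L e f" if "U \<subseteq> U_of P L e"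
      using frm_arrow_join_image[OF js jc fr that] by blast
  qed
qed

lemma jc_arrow_from_ideals_unique:
  assumes js: "join_spec P U"
    and f: "jc_arrow P (ideals P U) (eta P) L e f" and g: "jc_arrow P (ideals P U) (eta P) L e g"
    and C: "C \<in> ideals P U"
  shows "f C = g C"
  using jc_arrow_from_ideals_eq[OF js f C] jc_arrow_from_ideals_eq[OF js g C] by simp

theorem corollary5p14:
  fixes P :: "'a::order set"
  shows
    \<comment> \<open>F_P is well defined as a functor JF_P \<rightarrow> Frm_P (hence also JF^+_P \<rightarrow> JC_P)\<close>
    "(\<forall>U. frame_generating P U \<longrightarrow>
          join_completion P (ideals P U) (eta P) \<and> frame_on (ideals P U))
   \<and> (\<forall>U1 U2. frame_generating P U1 \<and> frame_generating P U2 \<and> U1 \<subseteq> U2 \<longrightarrow>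
          (\<exists>f. frm_arrow P (ideals P U1) (eta P) (ideals P U2) (eta P) f))
    \<comment> \<open>G_P is well defined as a functor JC_P \<rightarrow> JF^+_P (hence G'_P as well)\<close>
   \<and> (\<forall>(L :: 'l::order set) e. join_completion P L e \<longrightarrow>
          frame_generating P (G_obj P L e) \<and> maximal_spec P (G_obj P L e))
   \<and> (\<forall>(L1 :: 'l::order set) e1 (L2 :: 'm::order set) e2 f.
          join_completion P L1 e1 \<and> join_completion P L2 e2 \<and> jc_arrow P L1 e1 L2 e2 f \<longrightarrow>
          G_obj P L1 e1 \<subseteq> G_obj P L2 e2)
    \<comment> \<open>F_P \<circ> \<iota> \<turnstile> G_P : hom-sets JC_P(F U, e) correspond to JF^+_P(U, G e)\<close>
   \<and> (\<forall>U (L :: 'l::order set) e.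
          frame_generating P U \<and> maximal_spec P U \<and> join_completion P L e \<longrightarrow>
          ((\<exists>f. jc_arrow P (ideals P U) (eta P) L e f) \<longleftrightarrow> U \<subseteq> G_obj P L e)
          \<and> (\<forall>f g. jc_arrow P (ideals P U) (eta P) L e f \<and> jc_arrow P (ideals P U) (eta P) L e g
                 \<longrightarrow> (\<forall>x\<in>ideals P U. f x = g x)))
    \<comment> \<open>F_P \<turnstile> G'_P : hom-sets Frm_P(F U, e) correspond to JF_P(U, G' e)\<close>
   \<and> (\<forall>U (L :: 'l::order set) e.
          frame_generating P U \<and> join_completion P L e \<and> frame_on L \<longrightarrow>
          ((\<exists>f. frm_arrow P (ideals P U) (eta P) L e f) \<longleftrightarrow> U \<subseteq> G_obj P L e)
          \<and> (\<forall>f g. frm_arrow P (ideals P U) (eta P) L e f \<and> frm_arrow P (ideals P U) (eta P) L e g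
                 \<longrightarrow> (\<forall>x\<in>ideals P U. f x = g x)))
    \<comment> \<open>F_P \<circ> \<iota> \<turnstile> G'_P : hom-sets Frm_P(F U, e) correspond to JF^+_P(U, G' e)\<close>
   \<and> (\<forall>U (L :: 'l::order set) e.
          frame_generating P U \<and> maximal_spec P U \<and> join_completion P L e \<and> frame_on L \<longrightarrow>
          ((\<exists>f. frm_arrow P (ideals P U) (eta P) L e f) \<longleftrightarrow> U \<subseteq> G_obj P L e)
          \<and> (\<forall>f g. frm_arrow P (ideals P U) (eta P) L e f \<and> frm_arrow P (ideals P U) (eta P) L e g
                 \<longrightarrow> (\<forall>x\<in>ideals P U. f x = g x)))"
  apply (intro conjI allI impI ballI; (elim conjE)?)
  subgoal by (rule join_completion_eta[OF frame_generating_join_spec])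
  subgoal by (simp add: frame_generating_def)
  subgoal by (rule exI, rule frm_arrow_Gamma[OF frame_generating_join_spec])
  subgoal by (rule frame_generating_G_obj)
  subgoal by (rule maximal_spec_G_obj)
  subgoal by (rule G_obj_mono)
  subgoal by (rule jc_arrow_from_ideals_iff)
  subgoal by (rule jc_arrow_from_ideals_unique[OF frame_generating_join_spec])
  subgoal by (rule frm_arrow_from_ideals_iff)
  subgoal by (meson jc_arrow_from_ideals_unique frame_generating_join_spec frm_arrow_jc_arrow)
  subgoal by (rule frm_arrow_from_ideals_iff)
  subgoal by (meson jc_arrow_from_ideals_unique frame_generating_join_spec frm_arrow_jc_arrow)
  done

end
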